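(* Let $1<\beta\le2$. For Lebesgue-almost every $x\in[0,1]$, the function $G_\beta$ is not pointwise Lipschitz continuous at $x$; that is, there is no constant $K>0$ such that $|G_\beta(y)-G_\beta(x)|\le K|y-x|$ for all $y\in[0,1]$.
   Context: Fix $1<\beta\le 2$. The beta-map is $\tau_\beta:[0,1]\to[0,1]$, $\tau_\beta(x)=\beta x-[\beta x]$, where $[y]$ is the integer part of $y$. Let $m_\beta$ be the unique $\tau_\beta$-invariant Borel probability measure absolutely continuous with respect to Lebesgue measure. For $x\in[0,1]$ and $n\ge1$ the digits are $g_n(x)=[\beta\,\tau_\beta^{n-1}(x)]$, so that $x=\sum_{n\ge1}g_n(x)\beta^{-n}$ (greedy $\beta$-expansion). Put $M_\beta=m_\beta([1/\beta,1])=\int_0^1 g_1\,dm_\beta$. The generalized Takagi function is \[ G_\beta(x)=\frac{g_1(x)}{\beta}+\sum_{n=2}^\infty\frac{g_n(x)}{\beta^n}\Bigl(n-\frac{1}{M_\beta}\sum_{i=1}^{n-1}g_i(x)\Bigr),\qquad x\in[0,1]. \] *)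

theory Defs
  imports "HOL-Probability.Probability"
begin

definition beta_map :: "real \<Rightarrow> real \<Rightarrow> real" where
  "beta_map \<beta> x = \<beta> * x - of_int \<lfloor>\<beta> * x\<rfloor>"

definition beta_digit :: "real \<Rightarrow> nat \<Rightarrow> real \<Rightarrow> real" where
  "beta_digit \<beta> n x = of_int \<lfloor>\<beta> * (beta_map \<beta> ^^ (n - 1)) x\<rfloor>"

definition is_beta_acim :: "real \<Rightarrow> real measure \<Rightarrow> bool" where
  "is_beta_acim \<beta> m \<longleftrightarrow>
     sets m = sets (restrict_space borel {0..1}) \<and>
     prob_space m \<and>
     beta_map \<beta> \<in> measurable m m \<and>
     distr m m (beta_map \<beta>) = m \<and>
     absolutely_continuous (restrict_space lborel {0..1}) m"

definition beta_acim :: "real \<Rightarrow> real measure" where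
  "beta_acim \<beta> = (THE m. is_beta_acim \<beta> m)"

definition beta_M :: "real \<Rightarrow> real" where
  "beta_M \<beta> = measure (beta_acim \<beta>) {1/\<beta>..1}"

definition takagi_G :: "real \<Rightarrow> real \<Rightarrow> real" where
  "takagi_G \<beta> x = beta_digit \<beta> 1 x / \<beta> +
     (\<Sum>k. let n = k + 2 in
        beta_digit \<beta> n x / \<beta> ^ n *
        (real n - (1 / beta_M \<beta>) * (\<Sum>i=1..n-1. beta_digit \<beta> i x)))"

end

theory Submission
  imports Defs
begin

text \<open>
  Put \<open>W\<^sub>N(x) = N - (g\<^sub>1(x) + \<dots> + g\<^sub>N(x)) / M\<^sub>\<beta>\<close>. On the cylinder of points sharing the
  first \<open>N\<close> digits of \<open>x\<close>, \<open>G\<^sub>\<beta>\<close> is a rescaled copy of itself plus a linear function of slope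
  \<open>W\<^sub>N(x)\<close>: \<open>G(y) - G(x) = W\<^sub>N(x) (y - x) + \<beta>\<^sup>-\<^sup>N (G(\<tau>\<^sup>N y) - G(\<tau>\<^sup>N x))\<close>. Comparing the two
  points of the cylinder that \<open>\<tau>\<^sup>N\<close> maps to \<open>0\<close> and \<open>1/\<beta>\<close>, a Lipschitz bound at \<open>x\<close> bounds
  \<open>\<bar>W\<^sub>N(x)\<bar>\<close> whenever \<open>g\<^sub>N\<^sub>+\<^sub>1(x) = 1\<close>. Since \<open>W\<close> grows by one at every digit \<open>0\<close>, the runs
  of zeros in the expansion of \<open>x\<close> are then bounded, i.e. the orbit of \<open>x\<close> stays above some
  \<open>\<beta>\<^sup>-\<^sup>L\<close> unless it hits \<open>0\<close>. This fails for almost every \<open>x\<close>: \<open>\<tau>\<^sup>N\<close> maps every cylinder of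
  length \<open>N\<close> affinely onto an interval \<open>[0, \<rho>)\<close> with \<open>\<rho> \<le> 1\<close>, so each block of \<open>L\<close> digits
  vanishes with conditional probability at least \<open>\<beta>\<^sup>-\<^sup>L\<close>. The value of \<open>M\<^sub>\<beta>\<close> plays no role.
\<close>

lemma funpow_Suc_apply: "(f ^^ Suc n) x = (f ^^ n) (f x)"
  by (simp add: funpow_Suc_right del: funpow.simps)

lemma measure_lborel_affine_vimage:
  fixes c t :: real
  assumes A: "A \<in> sets borel" and c: "c \<noteq> 0"
  shows "measure lborel ((\<lambda>x. t + c * x) -` A) = measure lborel A / \<bar>c\<bar>"
proof -
  have "(\<lambda>x. t + c * x) -` A = (\<lambda>x. (1 / c) *\<^sub>R x + - t / c) ` A"
    using c by (force simp: field_simps image_iff)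
  moreover have "(\<lambda>x::real. t + c * x) -` A \<in> sets borel"
    using measurable_sets[OF _ A, of "\<lambda>x. t + c * x" borel] by simp
  ultimately show ?thesis
    using measure_lebesgue_affine[of "1 / c" "- t / c" A] A by simp
qed

lemma emeasure_lborel_subset_unit_finite: "A \<subseteq> {0..1::real} \<Longrightarrow> emeasure lborel A \<noteq> \<infinity>"
  using emeasure_bounded_finite[of A] bounded_subset[of "{0..1::real}" A] by auto

section \<open>Greedy \<open>\<beta>\<close>-expansions with digits \<open>0\<close> and \<open>1\<close>\<close>

definition beta_dig :: "real \<Rightarrow> real \<Rightarrow> int" where
  "beta_dig b x = \<lfloor>b * x\<rfloor>"

primrec beta_digits :: "real \<Rightarrow> nat \<Rightarrow> real \<Rightarrow> int list" where
  "beta_digits b 0 x = []"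
| "beta_digits b (Suc n) x = beta_dig b x # beta_digits b n (beta_map b x)"

lemma beta_map_eq: "beta_map b x = b * x - of_int (beta_dig b x)"
  by (simp add: beta_map_def beta_dig_def)

lemma beta_map_nonneg: "0 \<le> beta_map b x"
  and beta_map_less_one: "beta_map b x < 1"
  unfolding beta_map_def by linarith+

lemma beta_map_iterate_nonneg: "0 \<le> x \<Longrightarrow> 0 \<le> (beta_map b ^^ n) x"
  by (cases n) (auto simp: beta_map_nonneg)

lemma beta_map_iterate_less_one: "x < 1 \<Longrightarrow> (beta_map b ^^ n) x < 1"
  by (cases n) (auto simp: beta_map_less_one)

lemma beta_digit_Suc: "beta_digit b (Suc n) x = of_int (beta_dig b ((beta_map b ^^ n) x))"
  by (simp add: beta_digit_def beta_dig_def)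

lemma nth_beta_digits: "i < N \<Longrightarrow> beta_digits b N x ! i = beta_dig b ((beta_map b ^^ i) x)"
proof (induction N arbitrary: x i)
  case (Suc N)
  then show ?case
    by (cases i) (simp_all add: funpow_Suc_apply del: funpow.simps)
qed simp

lemma beta_expansion_partial_sum:
  assumes "b \<noteq> 0"
  shows "(\<Sum>n<N. of_int (beta_dig b ((beta_map b ^^ n) x)) / b ^ Suc n)
           = x - (beta_map b ^^ N) x / b ^ N"
proof (induction N)
  case (Suc N)
  have "(beta_map b ^^ Suc N) x / b ^ Suc N
          = (beta_map b ^^ N) x / b ^ N - of_int (beta_dig b ((beta_map b ^^ N) x)) / b ^ Suc N"
    using assms by (simp add: beta_map_eq diff_divide_distrib)
  then show ?case
    using Suc.IH by simp
qed simp

locale binary_beta =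
  fixes b :: real
  assumes one_less: "1 < b" and le_two: "b \<le> 2"
begin

abbreviation T :: "real \<Rightarrow> real" where
  "T \<equiv> beta_map b"

abbreviation dig :: "real \<Rightarrow> int" where
  "dig \<equiv> beta_dig b"

lemma dig_eq_0_iff: "0 \<le> x \<Longrightarrow> dig x = 0 \<longleftrightarrow> b * x < 1"
  using one_less unfolding beta_dig_def by (simp add: floor_eq_iff)

lemma dig_eq_1_iff: "x < 1 \<Longrightarrow> dig x = 1 \<longleftrightarrow> 1 \<le> b * x"
proof -
  assume "x < 1"
  then have "b * x < 2"
    using le_two one_less mult_strict_left_mono[of x 1 b] by linarith
  then show ?thesis
    unfolding beta_dig_def by (simp add: floor_eq_iff)
qed

lemma dig_cases: "0 \<le> x \<Longrightarrow> x < 1 \<Longrightarrow> dig x = 0 \<or> dig x = 1"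
  using dig_eq_0_iff dig_eq_1_iff by force

lemma dig_iterate_cases: "0 \<le> x \<Longrightarrow> x < 1 \<Longrightarrow> dig ((T ^^ n) x) = 0 \<or> dig ((T ^^ n) x) = 1"
  by (simp add: dig_cases beta_map_iterate_nonneg beta_map_iterate_less_one)

lemma beta_expansion_sums:
  assumes "0 \<le> x" "x < 1"
  shows "(\<lambda>n. of_int (dig ((T ^^ n) x)) / b ^ Suc n) sums x"
proof -
  have "(\<lambda>N. (T ^^ N) x / b ^ N) \<longlonglongrightarrow> 0"
  proof (rule Lim_null_comparison)
    show "\<forall>\<^sub>F N in sequentially. norm ((T ^^ N) x / b ^ N) \<le> (1 / b) ^ N"
    proof (intro always_eventually allI)
      fix N
      have "0 \<le> (T ^^ N) x" "(T ^^ N) x < 1"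
        using assms by (simp_all add: beta_map_iterate_nonneg beta_map_iterate_less_one)
      then show "norm ((T ^^ N) x / b ^ N) \<le> (1 / b) ^ N"
        using one_less by (simp add: power_divide divide_right_mono)
    qed
    show "(\<lambda>N. (1 / b) ^ N) \<longlonglongrightarrow> 0"
      using one_less by (intro LIMSEQ_power_zero) auto
  qed
  then have "(\<lambda>N. x - (T ^^ N) x / b ^ N) \<longlonglongrightarrow> x"
    using tendsto_diff[OF tendsto_const] by fastforce
  moreover have "b \<noteq> 0"
    using one_less by simp
  ultimately show ?thesis
    unfolding sums_def using beta_expansion_partial_sum[where b=b and x=x] by presburger
qed

lemma beta_digits_eq_imp_diff:
  assumes "beta_digits b N y = beta_digits b N x"
  shows "y - x = ((T ^^ N) y - (T ^^ N) x) / b ^ N"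
proof -
  have "(\<Sum>n<N. of_int (dig ((T ^^ n) y)) / b ^ Suc n) = (\<Sum>n<N. of_int (dig ((T ^^ n) x)) / b ^ Suc n)"
    using assms by (intro sum.cong) (auto simp: nth_beta_digits[symmetric])
  then have "y - (T ^^ N) y / b ^ N = x - (T ^^ N) x / b ^ N"
    using one_less by (simp only: beta_expansion_partial_sum)
  then show ?thesis
    by (simp add: diff_divide_distrib)
qed

lemma cylinder_point_exists:
  assumes "0 \<le> x" "x < 1" "0 \<le> u" "u \<le> (T ^^ N) x"
  obtains y where "0 \<le> y" "y \<le> x" "beta_digits b N y = beta_digits b N x" "(T ^^ N) y = u"
  using assms
proof (induction N arbitrary: x thesis)
  case 0
  then show ?case by auto
next
  case (Suc N)
  obtain y' where y': "0 \<le> y'" "y' \<le> T x" "beta_digits b N y' = beta_digits b N (T x)" "(T ^^ N) y' = u"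
    using Suc.IH[of "T x"] Suc.prems beta_map_nonneg beta_map_less_one
    by (metis funpow_Suc_apply)
  define y where "y = (of_int (dig x) + y') / b"
  have "y' < 1"
    using y'(2) beta_map_less_one[of b x] by linarith
  then have "dig y = dig x"
    using one_less y'(1) unfolding y_def beta_dig_def by (simp add: floor_eq_iff)
  then have Ty: "T y = y'"
    using one_less unfolding y_def beta_map_eq by simp
  have "x = (of_int (dig x) + T x) / b"
    using one_less by (simp add: beta_map_eq)
  moreover have "(of_int (dig x) + y') / b \<le> (of_int (dig x) + T x) / b"
    using y'(2) one_less by (simp add: divide_right_mono)
  ultimately have "y \<le> x"
    unfolding y_def by simp
  moreover have "0 \<le> y"
    using y'(1) one_less Suc.prems(2,3) dig_cases[of x] unfolding y_def by auto
  ultimately show ?case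
    using Suc.prems(1) y' Ty \<open>dig y = dig x\<close> by (simp add: funpow_Suc_apply del: funpow.simps)
qed

lemma beta_map_iterate_zero_digits:
  "(\<And>i. i < m \<Longrightarrow> dig ((T ^^ (n + i)) x) = 0) \<Longrightarrow> (T ^^ (n + m)) x = b ^ m * (T ^^ n) x"
proof (induction m)
  case (Suc m)
  have "dig ((T ^^ (n + m)) x) = 0"
    using Suc.prems by simp
  then have "(T ^^ (n + Suc m)) x = b * (T ^^ (n + m)) x"
    by (simp add: beta_map_eq[of b "(T ^^ (n + m)) x"])
  then show ?case
    using Suc by simp
qed simp

lemma next_one_digit:
  assumes "0 \<le> x" "x < 1" "0 < (T ^^ n) x"
  obtains m where "\<And>i. i < m \<Longrightarrow> dig ((T ^^ (n + i)) x) = 0" "dig ((T ^^ (n + m)) x) = 1"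
proof -
  have "\<exists>m. dig ((T ^^ (n + m)) x) \<noteq> 0"
  proof (rule ccontr)
    assume "\<nexists>m. dig ((T ^^ (n + m)) x) \<noteq> 0"
    then have grow: "(T ^^ (n + m)) x = b ^ m * (T ^^ n) x" for m
      using beta_map_iterate_zero_digits by blast
    obtain m where "1 < b ^ m * (T ^^ n) x"
      using real_arch_pow[OF one_less, of "1 / (T ^^ n) x"] assms(3) by (auto simp: field_simps)
    then show False
      using grow[of m] beta_map_iterate_less_one[OF assms(2)] by (metis not_less_iff_gr_or_eq)
  qed
  then obtain m where "dig ((T ^^ (n + m)) x) \<noteq> 0" "\<And>i. i < m \<Longrightarrow> dig ((T ^^ (n + i)) x) = 0"
    using exists_least_iff[of "\<lambda>m. dig ((T ^^ (n + m)) x) \<noteq> 0"] by blast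
  then show ?thesis
    using that dig_iterate_cases[OF assms(1,2)] by metis
qed

lemma small_iff_zero_digits:
  assumes "0 \<le> t" "t < 1"
  shows "t < (1 / b) ^ L \<longleftrightarrow> (\<forall>i<L. dig ((T ^^ i) t) = 0)"
proof
  assume small: "t < (1 / b) ^ L"
  show "\<forall>i<L. dig ((T ^^ i) t) = 0"
  proof (rule ccontr)
    assume "\<not> (\<forall>i<L. dig ((T ^^ i) t) = 0)"
    then obtain i where "i < L" "dig ((T ^^ i) t) \<noteq> 0" "\<And>j. j < i \<Longrightarrow> dig ((T ^^ j) t) = 0"
      using exists_least_iff[of "\<lambda>i. i < L \<and> dig ((T ^^ i) t) \<noteq> 0"] by (auto dest: order.strict_trans)
    then have "1 \<le> b * (T ^^ i) t" and grow: "(T ^^ i) t = b ^ i * t"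
      using dig_iterate_cases[OF assms] dig_eq_1_iff beta_map_iterate_less_one[OF assms(2)]
        beta_map_iterate_zero_digits[of i 0 t] by (metis, simp)
    then have "(1 / b) ^ Suc i \<le> t"
      using one_less by (simp add: power_divide divide_le_eq ac_simps)
    moreover have "(1 / b) ^ L \<le> (1 / b) ^ Suc i"
      using \<open>i < L\<close> one_less by (intro power_decreasing) auto
    ultimately show False
      using small by linarith
  qed
next
  assume "\<forall>i<L. dig ((T ^^ i) t) = 0"
  then have "(T ^^ L) t = b ^ L * t"
    using beta_map_iterate_zero_digits[of L 0 t] by simp
  then have "b ^ L * t < 1"
    using beta_map_iterate_less_one[OF assms(2)] by metis
  then show "t < (1 / b) ^ L"
    using one_less by (simp add: power_divide field_simps)
qed

section \<open>Almost every orbit comes arbitrarily close to \<open>0\<close>\<close>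

text \<open>The bound \<open>r\<close> is needed in the recursion on \<open>N\<close> because \<open>T\<close> maps a cylinder that is
  not full onto an interval \<open>[0, \<rho>)\<close> with \<open>\<rho> < 1\<close>.\<close>

definition digit_set :: "nat \<Rightarrow> int list set \<Rightarrow> real \<Rightarrow> real \<Rightarrow> real set" where
  "digit_set N S r \<delta> = {x. 0 \<le> x \<and> x < r \<and> beta_digits b N x \<in> S \<and> (T ^^ N) x < \<delta>}"

lemma digit_set_0: "digit_set 0 S r \<delta> = (if [] \<in> S then {0..<min r \<delta>} else {})"
  by (auto simp: digit_set_def)

lemma digit_set_Suc:
  assumes "r \<le> 1"
  shows "digit_set (Suc N) S r \<delta>
    = (\<lambda>x. 0 + b * x) -` digit_set N {w. 0 # w \<in> S} (min 1 (b * r)) \<delta>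
      \<union> (\<lambda>x. -1 + b * x) -` digit_set N {w. 1 # w \<in> S} (min (b - 1) (b * r - 1)) \<delta>"
proof (rule set_eqI)
  fix x
  have "x < r \<longleftrightarrow> b * x < b * r"
    using one_less by simp
  consider "x < 0" | "0 \<le> x" "b * x < 1" | "1 \<le> b * x" "x < 1" | "1 \<le> x"
    by linarith
  then show "x \<in> digit_set (Suc N) S r \<delta> \<longleftrightarrow> x \<in> (\<lambda>x. 0 + b * x) -` digit_set N {w. 0 # w \<in> S} (min 1 (b * r)) \<delta>
      \<union> (\<lambda>x. -1 + b * x) -` digit_set N {w. 1 # w \<in> S} (min (b - 1) (b * r - 1)) \<delta>"
  proof cases
    case 1
    then have "b * x < 0"
      using one_less by (simp add: mult_pos_neg)
    then show ?thesis
      using 1 by (auto simp: digit_set_def)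
  next
    case 2
    then have "dig x = 0" "T x = b * x"
      using dig_eq_0_iff by (simp_all add: beta_map_eq)
    then show ?thesis
      using 2 one_less \<open>x < r \<longleftrightarrow> b * x < b * r\<close>
      by (auto simp: digit_set_def funpow_Suc_apply simp del: funpow.simps)
  next
    case 3
    then have "dig x = 1" "T x = -1 + b * x"
      using dig_eq_1_iff by (simp_all add: beta_map_eq)
    moreover have "0 \<le> x"
      using 3 one_less zero_less_mult_iff[of b x] by simp
    ultimately show ?thesis
      using 3 one_less \<open>x < r \<longleftrightarrow> b * x < b * r\<close>
      by (auto simp: digit_set_def funpow_Suc_apply simp del: funpow.simps)
  next
    case 4
    then have "b \<le> b * x"
      using one_less by simp
    then show ?thesis
      using 4 assms one_less by (auto simp: digit_set_def)
  qed
qed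

lemma digit_set_borel: "r \<le> 1 \<Longrightarrow> digit_set N S r \<delta> \<in> sets borel"
proof (induction N arbitrary: S r)
  case (Suc N)
  have vimage: "(\<lambda>x. t + b * x) -` A \<in> sets borel" if "A \<in> sets borel" for t A
    using measurable_sets[OF _ that, of "\<lambda>x. t + b * x" borel] by simp
  have "min 1 (b * r) \<le> 1" "min (b - 1) (b * r - 1) \<le> 1"
    using le_two by auto
  then show ?case
    unfolding digit_set_Suc[OF Suc.prems] by (intro sets.Un vimage Suc.IH)
qed (simp add: digit_set_0)

lemma measure_digit_set_Suc:
  assumes "r \<le> 1"
  shows "measure lborel (digit_set (Suc N) S r \<delta>)
    = (measure lborel (digit_set N {w. 0 # w \<in> S} (min 1 (b * r)) \<delta>)
       + measure lborel (digit_set N {w. 1 # w \<in> S} (min (b - 1) (b * r - 1)) \<delta>)) / b"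
proof -
  let ?A0 = "digit_set N {w. 0 # w \<in> S} (min 1 (b * r)) \<delta>"
  let ?A1 = "digit_set N {w. 1 # w \<in> S} (min (b - 1) (b * r - 1)) \<delta>"
  let ?P0 = "(\<lambda>x. 0 + b * x) -` ?A0" and ?P1 = "(\<lambda>x. -1 + b * x) -` ?A1"
  have A: "?A0 \<in> sets borel" "?A1 \<in> sets borel"
    using le_two by (auto intro: digit_set_borel)
  have P: "?P0 \<in> sets borel" "?P1 \<in> sets borel"
    using measurable_sets[OF _ A(1), of "\<lambda>x. 0 + b * x" borel]
      measurable_sets[OF _ A(2), of "\<lambda>x. -1 + b * x" borel] by simp_all
  have "digit_set (Suc N) S r \<delta> \<subseteq> {0..1}"
    using assms by (auto simp: digit_set_def)
  then have "?P0 \<union> ?P1 \<subseteq> {0..1}"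
    unfolding digit_set_Suc[OF assms] .
  moreover have "?P0 \<inter> ?P1 = {}"
    by (auto simp: digit_set_def)
  ultimately have "measure lborel (?P0 \<union> ?P1) = measure lborel ?P0 + measure lborel ?P1"
    using P by (intro measure_Union emeasure_lborel_subset_unit_finite) auto
  also have "\<dots> = measure lborel ?A0 / b + measure lborel ?A1 / b"
    using measure_lborel_affine_vimage[OF A(1), of b 0] measure_lborel_affine_vimage[OF A(2), of b "-1"]
      one_less by simp
  finally show ?thesis
    unfolding digit_set_Suc[OF assms] by (simp add: add_divide_distrib)
qed

lemma measure_digit_set_lower:
  assumes "r \<le> 1" "0 < \<delta>" "\<delta> \<le> 1"
  shows "\<delta> * measure lborel (digit_set N S r 1) \<le> measure lborel (digit_set N S r \<delta>)"
  using assms(1)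
proof (induction N arbitrary: S r)
  case 0
  show ?case
  proof (cases "[] \<in> S \<and> 0 \<le> r")
    case True
    have "\<delta> * r \<le> \<delta>" "\<delta> * r \<le> r"
      using True 0 assms(2,3) by (simp_all add: mult_left_le mult_left_le_one_le)
    then show ?thesis
      using True 0 assms(2) by (simp add: digit_set_0 min_def)
  qed (auto simp: digit_set_0)
next
  case (Suc N)
  have "min 1 (b * r) \<le> 1" "min (b - 1) (b * r - 1) \<le> 1"
    using le_two by auto
  let ?m = "\<lambda>S r \<delta>. measure lborel (digit_set N S r \<delta>)"
  let ?S0 = "{w. 0 # w \<in> S}" and ?r0 = "min 1 (b * r)"
  let ?S1 = "{w. 1 # w \<in> S}" and ?r1 = "min (b - 1) (b * r - 1)"
  have "\<delta> * measure lborel (digit_set (Suc N) S r 1) = (\<delta> * ?m ?S0 ?r0 1 + \<delta> * ?m ?S1 ?r1 1) / b"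
    by (simp add: measure_digit_set_Suc[OF Suc.prems] distrib_left)
  also have "\<dots> \<le> (?m ?S0 ?r0 \<delta> + ?m ?S1 ?r1 \<delta>) / b"
    using Suc.IH \<open>?r0 \<le> 1\<close> \<open>?r1 \<le> 1\<close> one_less by (intro divide_right_mono add_mono) auto
  also have "\<dots> = measure lborel (digit_set (Suc N) S r \<delta>)"
    by (simp add: measure_digit_set_Suc[OF Suc.prems])
  finally show ?case .
qed

definition orbit_above :: "nat \<Rightarrow> nat \<Rightarrow> real set" where
  "orbit_above L k = {x. 0 \<le> x \<and> x < 1 \<and> (\<forall>j<k. (1 / b) ^ L \<le> (T ^^ (j * L)) x)}"

definition nonzero_blocks :: "nat \<Rightarrow> nat \<Rightarrow> int list set" where
  "nonzero_blocks L k = {w. \<forall>j<k. \<exists>i<L. w ! (j * L + i) \<noteq> 0}"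

lemma orbit_above_eq_digit_set: "orbit_above L k = digit_set (k * L) (nonzero_blocks L k) 1 1"
proof -
  have "(1 / b) ^ L \<le> (T ^^ (j * L)) x \<longleftrightarrow> (\<exists>i<L. beta_digits b (k * L) x ! (j * L + i) \<noteq> 0)"
    if "0 \<le> x" "x < 1" "j < k" for x j
  proof -
    have "j * L + i < k * L" if "i < L" for i
    proof -
      have "j * L + i < Suc j * L"
        using that by simp
      also have "\<dots> \<le> k * L"
        using \<open>j < k\<close> by (intro mult_right_mono) auto
      finally show ?thesis .
    qed
    then have "beta_digits b (k * L) x ! (j * L + i) = dig ((T ^^ i) ((T ^^ (j * L)) x))" if "i < L" for i
      using that by (simp add: nth_beta_digits funpow_add add.commute)
    then show ?thesis
      using small_iff_zero_digits[of "(T ^^ (j * L)) x" L] that(1,2)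
      by (auto simp: not_less beta_map_iterate_nonneg beta_map_iterate_less_one)
  qed
  then show ?thesis
    by (auto simp: orbit_above_def digit_set_def nonzero_blocks_def beta_map_iterate_less_one)
qed

lemma digit_set_nonzero_blocks:
  "digit_set (k * L) (nonzero_blocks L k) 1 \<delta> = {x \<in> orbit_above L k. (T ^^ (k * L)) x < \<delta>}"
  unfolding orbit_above_eq_digit_set by (auto simp: digit_set_def beta_map_iterate_less_one)

lemma orbit_above_Suc:
  "orbit_above L (Suc k) = orbit_above L k - digit_set (k * L) (nonzero_blocks L k) 1 ((1 / b) ^ L)"
  unfolding digit_set_nonzero_blocks by (auto simp: orbit_above_def less_Suc_eq not_less)

lemma orbit_above_borel: "orbit_above L k \<in> sets borel"
  unfolding orbit_above_eq_digit_set by (simp add: digit_set_borel)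

lemma orbit_above_subset: "orbit_above L k \<subseteq> {0..1}"
  by (auto simp: orbit_above_def)

lemma measure_orbit_above: "measure lborel (orbit_above L k) \<le> (1 - (1 / b) ^ L) ^ k"
proof (induction k)
  case 0
  have "orbit_above L 0 = {0..<1}"
    by (auto simp: orbit_above_def)
  then show ?case
    by simp
next
  case (Suc k)
  let ?q = "(1 / b) ^ L"
  let ?E = "digit_set (k * L) (nonzero_blocks L k) 1 ?q"
  have q: "0 < ?q" "?q \<le> 1"
    using one_less by (auto simp: power_le_one)
  have E: "?E \<in> sets borel" "?E \<subseteq> orbit_above L k"
    by (simp add: digit_set_borel) (auto simp: digit_set_nonzero_blocks)
  have "measure lborel (orbit_above L (Suc k)) = measure lborel (orbit_above L k) - measure lborel ?E"
    unfolding orbit_above_Suc using E orbit_above_borel[of L k] orbit_above_subset[of L k]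
    by (intro measure_Diff emeasure_lborel_subset_unit_finite) simp_all
  also have "\<dots> \<le> (1 - ?q) * measure lborel (orbit_above L k)"
    using measure_digit_set_lower[of 1 ?q "k * L" "nonzero_blocks L k"] q
    unfolding orbit_above_eq_digit_set by (simp add: algebra_simps)
  also have "\<dots> \<le> (1 - ?q) * (1 - ?q) ^ k"
    using Suc.IH q by (intro mult_left_mono) auto
  finally show ?case
    by simp
qed

lemma orbit_above_null: "(\<Inter>k. orbit_above L k) \<in> null_sets lborel"
proof -
  let ?F = "\<Inter>k. orbit_above L k"
  have F: "?F \<in> sets borel"
    using orbit_above_borel by (intro sets.countable_INT) auto
  have fin: "emeasure lborel ?F \<noteq> \<infinity>"
    using orbit_above_subset by (intro emeasure_lborel_subset_unit_finite) blast
  have "measure lborel ?F \<le> (1 - (1 / b) ^ L) ^ k" for k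
  proof -
    have "orbit_above L k \<in> fmeasurable lborel"
      using orbit_above_borel[of L k] emeasure_lborel_subset_unit_finite[OF orbit_above_subset]
      by (intro fmeasurableI) (simp_all add: less_top)
    then have "measure lborel ?F \<le> measure lborel (orbit_above L k)"
      using F by (intro measure_mono_fmeasurable) auto
    then show ?thesis
      using measure_orbit_above[of L k] by linarith
  qed
  moreover have "(\<lambda>k. (1 - (1 / b) ^ L) ^ k) \<longlonglongrightarrow> 0"
    using one_less by (intro LIMSEQ_power_zero) (auto simp: power_le_one)
  ultimately have "measure lborel ?F \<le> 0"
    by (intro LIMSEQ_le_const) auto
  then have "measure lborel ?F = 0"
    using measure_nonneg[of lborel ?F] by linarith
  then have "emeasure lborel ?F = 0"
    using fin emeasure_eq_ennreal_measure[of lborel ?F] by simp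
  then show ?thesis
    using F by auto
qed

lemma finite_zero_preimage: "finite {x. 0 \<le> x \<and> x < 1 \<and> (T ^^ n) x = 0}"
proof (induction n)
  case 0
  then show ?case
    by simp
next
  case (Suc n)
  let ?Z = "{x. 0 \<le> x \<and> x < 1 \<and> (T ^^ n) x = 0}"
  have "x \<in> (\<lambda>z. (of_int d + z) / b) ` ?Z" if "0 \<le> x" "x < 1" "(T ^^ Suc n) x = 0" "d = dig x" for x d
  proof
    show "x = (of_int d + T x) / b"
      using one_less that(4) by (simp add: beta_map_eq)
  qed (use that in \<open>simp_all add: funpow_Suc_apply beta_map_nonneg beta_map_less_one del: funpow.simps\<close>)
  then have "{x. 0 \<le> x \<and> x < 1 \<and> (T ^^ Suc n) x = 0} \<subseteq> (\<lambda>z. z / b) ` ?Z \<union> (\<lambda>z. (1 + z) / b) ` ?Z"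
    using dig_cases by fastforce
  then show ?case
    using Suc.IH finite_subset by blast
qed

lemma AE_orbit_approaches_zero:
  "AE x in lborel. 0 \<le> x \<longrightarrow> x < 1 \<longrightarrow> (\<forall>L. \<exists>n. (T ^^ n) x \<noteq> 0 \<and> (T ^^ n) x < (1 / b) ^ L)"
proof -
  have "AE x in lborel. x \<notin> (\<Union>n. {x. 0 \<le> x \<and> x < 1 \<and> (T ^^ n) x = 0})"
    by (intro AE_not_in null_sets_UN finite_imp_null_set_lborel finite_zero_preimage)
  moreover have "AE x in lborel. x \<notin> (\<Union>L. \<Inter>k. orbit_above L k)"
    by (intro AE_not_in null_sets_UN orbit_above_null)
  ultimately show ?thesis
  proof eventually_elim
    case (elim x)
    then show ?case
      by (fastforce simp: orbit_above_def not_le)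
  qed
qed

end

section \<open>The generalized Takagi function\<close>

locale takagi_beta = binary_beta +
  fixes c :: real
begin

text \<open>For \<open>c = 1/M\<^sub>\<beta>\<close>, \<open>slope x N\<close> is \<open>W\<^sub>N(x)\<close> and \<open>takagi_term x n\<close> is the term of index \<open>n + 1\<close>
  of the series defining \<open>G\<^sub>\<beta>\<close>.\<close>

definition digit_count :: "real \<Rightarrow> nat \<Rightarrow> real" where
  "digit_count x n = (\<Sum>i<n. of_int (dig ((T ^^ i) x)))"

definition slope :: "real \<Rightarrow> nat \<Rightarrow> real" where
  "slope x n = real n - c * digit_count x n"

definition takagi_term :: "real \<Rightarrow> nat \<Rightarrow> real" where
  "takagi_term x n = of_int (dig ((T ^^ n) x)) / b ^ Suc n * (slope x n + 1)"

definition takagi :: "real \<Rightarrow> real" where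
  "takagi x = suminf (takagi_term x)"

lemma slope_0 [simp]: "slope x 0 = 0"
  by (simp add: slope_def digit_count_def)

lemma slope_Suc: "slope x (Suc n) = slope x n + 1 - c * of_int (dig ((T ^^ n) x))"
  by (simp add: slope_def digit_count_def algebra_simps)

lemma slope_Suc_shift: "slope x (Suc n) = slope (T x) n + 1 - c * of_int (dig x)"
  unfolding slope_def digit_count_def
  by (subst sum.lessThan_Suc_shift) (simp add: funpow_Suc_apply algebra_simps del: funpow.simps)

lemma digit_count_bounds:
  assumes "0 \<le> x" "x < 1"
  shows "0 \<le> digit_count x n" "digit_count x n \<le> n"
proof -
  have "0 \<le> (of_int (dig ((T ^^ i) x)) :: real)" "of_int (dig ((T ^^ i) x)) \<le> (1::real)" for i
    using dig_iterate_cases[OF assms, of i] by auto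
  then show "0 \<le> digit_count x n" "digit_count x n \<le> n"
    unfolding digit_count_def using sum_mono[of "{..<n}" _ "\<lambda>_. 1::real"]
    by (auto intro: sum_nonneg)
qed

lemma abs_slope_le:
  assumes "0 \<le> x" "x < 1"
  shows "\<bar>slope x n\<bar> \<le> (1 + \<bar>c\<bar>) * n"
proof -
  have "\<bar>c * digit_count x n\<bar> \<le> \<bar>c\<bar> * n"
    using digit_count_bounds[OF assms, of n] by (simp add: abs_mult mult_left_mono)
  then show ?thesis
    using abs_triangle_ineq4[of "real n" "c * digit_count x n"] by (simp add: slope_def algebra_simps)
qed

lemma summable_takagi_term:
  assumes "0 \<le> x" "x < 1"
  shows "summable (takagi_term x)"
proof (rule summable_comparison_test')
  have "summable (\<lambda>n. (1 / b) ^ n * real n)"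
    using geometric_sums_times_n[of "1 / b"] one_less sums_summable by auto
  then have "summable (\<lambda>n. (1 / b) ^ Suc n * real (Suc n))"
    by (subst summable_Suc_iff)
  then show "summable (\<lambda>n. (1 + \<bar>c\<bar>) * ((1 / b) ^ Suc n * real (Suc n)))"
    by (rule summable_mult)
  fix n
  have "\<bar>of_int (dig ((T ^^ n) x)) :: real\<bar> \<le> 1"
    using dig_iterate_cases[OF assms, of n] by auto
  moreover have "\<bar>slope x n + 1\<bar> \<le> (1 + \<bar>c\<bar>) * real (Suc n)"
    using abs_slope_le[OF assms, of n] abs_triangle_ineq[of "slope x n" 1] abs_ge_zero[of c]
    by (simp add: algebra_simps)
  ultimately have "\<bar>of_int (dig ((T ^^ n) x))\<bar> * \<bar>slope x n + 1\<bar> / b ^ Suc n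
      \<le> 1 * ((1 + \<bar>c\<bar>) * real (Suc n)) / b ^ Suc n"
    using one_less by (intro divide_right_mono mult_mono) auto
  then show "norm (takagi_term x n) \<le> (1 + \<bar>c\<bar>) * ((1 / b) ^ Suc n * real (Suc n))"
    using one_less unfolding takagi_term_def by (simp add: abs_mult power_divide del: power_Suc)
qed

lemma takagi_G_eq_takagi:
  assumes "c = 1 / beta_M b" "0 \<le> x" "x < 1"
  shows "takagi_G b x = takagi x"
proof -
  have count: "(\<Sum>i=1..n. beta_digit b i x) = digit_count x n" for n
    by (simp add: digit_count_def sum.atLeast1_atMost_eq beta_digit_Suc del: funpow.simps)
  have "(let n = k + 2 in beta_digit b n x / b ^ n *
          (real n - (1 / beta_M b) * (\<Sum>i=1..n-1. beta_digit b i x))) = takagi_term x (Suc k)" for k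
    unfolding Let_def takagi_term_def slope_def assms(1)[symmetric] count[symmetric]
    by (simp add: numeral_2_eq_2 beta_digit_Suc del: funpow.simps power_Suc)
  moreover have "beta_digit b 1 x / b = takagi_term x 0"
    by (simp add: takagi_term_def beta_digit_Suc[of b 0, simplified])
  ultimately have "takagi_G b x = takagi_term x 0 + (\<Sum>k. takagi_term x (Suc k))"
    unfolding takagi_G_def by simp
  then show ?thesis
    unfolding takagi_def using suminf_split_head[OF summable_takagi_term[OF assms(2,3)]] by simp
qed

lemma takagi_functional_eq:
  assumes "0 \<le> x" "x < 1"
  shows "takagi x = (of_int (dig x) + takagi (T x) + (1 - c * of_int (dig x)) * T x) / b"
proof -
  let ?d = "of_int (dig x) :: real"
  have Tx: "0 \<le> T x" "T x < 1"
    by (simp_all add: beta_map_nonneg beta_map_less_one)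
  have shift: "takagi_term x (Suc n) = takagi_term (T x) n / b
      + (1 - c * ?d) * (of_int (dig ((T ^^ n) (T x))) / b ^ Suc n) / b" for n
    unfolding takagi_term_def slope_Suc_shift funpow_Suc_apply using one_less
    by (simp add: field_simps)
  have "(\<lambda>n. takagi_term (T x) n / b) sums (takagi (T x) / b)"
    using summable_takagi_term[OF Tx] unfolding takagi_def by (intro sums_divide summable_sums)
  moreover have "(\<lambda>n. (1 - c * ?d) * (of_int (dig ((T ^^ n) (T x))) / b ^ Suc n) / b)
      sums ((1 - c * ?d) * T x / b)"
    using beta_expansion_sums[OF Tx] by (intro sums_divide sums_mult)
  ultimately have "(\<lambda>n. takagi_term x (Suc n)) sums (takagi (T x) / b + (1 - c * ?d) * T x / b)"
    unfolding shift by (rule sums_add)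
  then have "takagi_term x sums (takagi (T x) / b + (1 - c * ?d) * T x / b + takagi_term x 0)"
    by (simp add: sums_Suc_iff)
  moreover have "takagi_term x 0 = ?d / b"
    by (simp add: takagi_term_def)
  ultimately show ?thesis
    unfolding takagi_def by (simp add: sums_iff add_divide_distrib)
qed

lemma takagi_cylinder_diff:
  assumes "0 \<le> x" "x < 1" "0 \<le> y" "y < 1" "beta_digits b N y = beta_digits b N x"
  shows "takagi y - takagi x
           = slope x N * (y - x) + (takagi ((T ^^ N) y) - takagi ((T ^^ N) x)) / b ^ N"
  using assms
proof (induction N arbitrary: x y)
  case (Suc N)
  let ?d = "of_int (dig x) :: real"
  have dig: "dig y = dig x" and digits: "beta_digits b N (T y) = beta_digits b N (T x)"
    using Suc.prems(5) by simp_all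
  have IH: "takagi (T y) - takagi (T x)
      = slope (T x) N * (T y - T x) + (takagi ((T ^^ N) (T y)) - takagi ((T ^^ N) (T x))) / b ^ N"
    using Suc.IH[OF _ _ _ _ digits] by (simp add: beta_map_nonneg beta_map_less_one)
  have T_diff: "T y - T x = b * (y - x)"
    using dig by (simp add: beta_map_eq algebra_simps)
  have "takagi y - takagi x = ((?d + takagi (T y) + (1 - c * ?d) * T y)
      - (?d + takagi (T x) + (1 - c * ?d) * T x)) / b"
    unfolding takagi_functional_eq[OF Suc.prems(1,2)] takagi_functional_eq[OF Suc.prems(3,4)] dig
    by (simp only: diff_divide_distrib)
  also have "\<dots> = (takagi (T y) - takagi (T x) + (1 - c * ?d) * (T y - T x)) / b"
    by (simp add: algebra_simps)
  also have "\<dots> = (slope (T x) N + 1 - c * ?d) * (y - x)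
      + (takagi ((T ^^ N) (T y)) - takagi ((T ^^ N) (T x))) / b ^ Suc N"
    unfolding IH T_diff using one_less by (simp add: field_simps)
  finally show ?case
    by (simp add: slope_Suc_shift funpow_Suc_apply del: funpow.simps)
qed simp

lemma takagi_cylinder_ends:
  assumes "0 \<le> x" "x < 1" and one: "dig ((T ^^ N) x) = 1"
  obtains y0 y1 where "0 \<le> y0" "y0 \<le> x" "x - y0 \<le> 1 / b ^ N" "0 \<le> y1" "y1 \<le> x" "x - y1 \<le> 1 / b ^ N"
    and "takagi y0 - takagi y1 = (takagi 0 - takagi (1 / b) - slope x N / b) / b ^ N"
proof -
  let ?t = "(T ^^ N) x"
  have t: "0 \<le> ?t" "?t < 1"
    using assms(1,2) by (simp_all add: beta_map_iterate_nonneg beta_map_iterate_less_one)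
  have "1 / b \<le> ?t"
    using one dig_eq_1_iff[OF t(2)] one_less by (simp add: divide_le_eq mult.commute)
  obtain y0 where y0: "0 \<le> y0" "y0 \<le> x" "beta_digits b N y0 = beta_digits b N x" "(T ^^ N) y0 = 0"
    using cylinder_point_exists[OF assms(1,2) order_refl t(1)] .
  obtain y1 where y1: "0 \<le> y1" "y1 \<le> x" "beta_digits b N y1 = beta_digits b N x" "(T ^^ N) y1 = 1 / b"
    using cylinder_point_exists[OF assms(1,2) _ \<open>1 / b \<le> ?t\<close>] one_less by auto
  have x_y0: "x - y0 = ?t / b ^ N" and x_y1: "x - y1 = (?t - 1 / b) / b ^ N"
    using beta_digits_eq_imp_diff[OF y0(3)] beta_digits_eq_imp_diff[OF y1(3)] y0(4) y1(4)
    by (simp_all add: diff_divide_distrib)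
  have "?t - 1 / b \<le> 1"
    using t one_less divide_nonneg_nonneg[of 1 b] by linarith
  then have "x - y0 \<le> 1 / b ^ N" "x - y1 \<le> 1 / b ^ N"
    unfolding x_y0 x_y1 using t one_less by (auto intro!: divide_right_mono)
  moreover have "takagi y0 - takagi y1 = slope x N * (y0 - y1) + (takagi 0 - takagi (1 / b)) / b ^ N"
    using takagi_cylinder_diff[OF assms(1,2) _ _ y0(3)] takagi_cylinder_diff[OF assms(1,2) _ _ y1(3)]
      y0 y1 assms(2) by (simp add: diff_divide_distrib algebra_simps)
  moreover have "y0 - y1 = - (1 / b) / b ^ N"
    using x_y0 x_y1 by (simp add: diff_divide_distrib)
  ultimately show ?thesis
    using that y0(1,2) y1(1,2) by (simp add: diff_divide_distrib)
qed

lemma slope_bound_at_digit_one: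
  assumes "0 \<le> x" "x < 1" "0 \<le> K"
    and lip: "\<And>y. 0 \<le> y \<Longrightarrow> y \<le> x \<Longrightarrow> \<bar>takagi y - takagi x\<bar> \<le> K * (x - y)"
    and one: "dig ((T ^^ N) x) = 1"
  shows "\<bar>slope x N\<bar> \<le> b * (2 * K + \<bar>takagi 0 - takagi (1 / b)\<bar>)"
proof -
  obtain y0 y1 where y0: "0 \<le> y0" "y0 \<le> x" "x - y0 \<le> 1 / b ^ N"
    and y1: "0 \<le> y1" "y1 \<le> x" "x - y1 \<le> 1 / b ^ N"
    and diff: "takagi y0 - takagi y1 = (takagi 0 - takagi (1 / b) - slope x N / b) / b ^ N"
    using takagi_cylinder_ends[OF assms(1,2) one] .
  have "\<bar>takagi y0 - takagi y1\<bar> \<le> K * (x - y0) + K * (x - y1)"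
    using lip[OF y0(1,2)] lip[OF y1(1,2)] by linarith
  also have "\<dots> \<le> K * (1 / b ^ N) + K * (1 / b ^ N)"
    using y0(3) y1(3) assms(3) by (intro add_mono mult_left_mono)
  finally have "\<bar>takagi 0 - takagi (1 / b) - slope x N / b\<bar> \<le> 2 * K"
    unfolding diff using one_less by (simp add: divide_le_cancel)
  then have "\<bar>slope x N\<bar> / b \<le> 2 * K + \<bar>takagi 0 - takagi (1 / b)\<bar>"
    using one_less by simp
  then show ?thesis
    using one_less by (simp add: divide_le_eq mult.commute)
qed

lemma slope_lower_bound:
  assumes "0 \<le> x" "x < 1" "0 \<le> B"
    and bound: "\<And>N. dig ((T ^^ N) x) = 1 \<Longrightarrow> \<bar>slope x N\<bar> \<le> B"
  shows "- (B + \<bar>1 - c\<bar>) \<le> slope x n"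
proof (induction n)
  case (Suc n)
  from dig_iterate_cases[OF assms(1,2), of n] show ?case
  proof
    assume "dig ((T ^^ n) x) = 0"
    then show ?case
      using Suc.IH by (simp add: slope_Suc)
  next
    assume "dig ((T ^^ n) x) = 1"
    then show ?case
      using bound[of n] by (simp add: slope_Suc)
  qed
qed (use assms(3) abs_ge_zero[of "1 - c"] in simp)

lemma slope_zero_digits:
  "(\<And>i. i < m \<Longrightarrow> dig ((T ^^ (n + i)) x) = 0) \<Longrightarrow> slope x (n + m) = slope x n + m"
  by (induction m) (simp_all add: slope_Suc)

lemma orbit_bounded_below:
  assumes "0 \<le> x" "x < 1" "0 \<le> B"
    and bound: "\<And>N. dig ((T ^^ N) x) = 1 \<Longrightarrow> \<bar>slope x N\<bar> \<le> B"
    and L: "2 * B + \<bar>1 - c\<bar> < L"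
  shows "(T ^^ n) x = 0 \<or> (1 / b) ^ L \<le> (T ^^ n) x"
proof (cases "(T ^^ n) x = 0")
  case False
  let ?t = "(T ^^ n) x"
  have t: "0 \<le> ?t" "?t < 1"
    using assms(1,2) by (simp_all add: beta_map_iterate_nonneg beta_map_iterate_less_one)
  then obtain m where zeros: "\<And>i. i < m \<Longrightarrow> dig ((T ^^ (n + i)) x) = 0"
    and one: "dig ((T ^^ (n + m)) x) = 1"
    using next_one_digit[OF assms(1,2)] False by (metis less_le)
  have "slope x (n + m) = slope x n + m"
    using slope_zero_digits[OF zeros] .
  then have "real m \<le> 2 * B + \<bar>1 - c\<bar>"
    using bound[OF one] slope_lower_bound[OF assms(1-3) bound, of n] by linarith
  then have "m < L"
    using L by linarith
  moreover have "dig ((T ^^ m) ?t) = 1"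
    using one by (metis add.commute comp_apply funpow_add)
  ultimately have "\<not> ?t < (1 / b) ^ L"
    using small_iff_zero_digits[OF t] by auto
  then show ?thesis
    by simp
qed simp

lemma left_lipschitz_imp_orbit_bounded_below:
  assumes "0 \<le> x" "x < 1" "0 \<le> K"
    and lip: "\<And>y. 0 \<le> y \<Longrightarrow> y \<le> x \<Longrightarrow> \<bar>takagi y - takagi x\<bar> \<le> K * (x - y)"
  obtains L where "\<And>n. (T ^^ n) x = 0 \<or> (1 / b) ^ L \<le> (T ^^ n) x"
proof -
  define B where "B = b * (2 * K + \<bar>takagi 0 - takagi (1 / b)\<bar>)"
  have "0 \<le> B"
    unfolding B_def using one_less assms(3) by simp
  moreover have "2 * B + \<bar>1 - c\<bar> < nat \<lceil>2 * B + \<bar>1 - c\<bar>\<rceil> + 1"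
    by linarith
  ultimately show ?thesis
    using that orbit_bounded_below[OF assms(1,2)] slope_bound_at_digit_one[OF assms] B_def
    by metis
qed

end

theorem theorem4p1:
  fixes \<beta> :: real
  assumes "1 < \<beta>" and "\<beta> \<le> 2"
  shows "AE x in lborel. x \<in> {0..1} \<longrightarrow>
           \<not> (\<exists>K>0. \<forall>y\<in>{0..1}.
                  \<bar>takagi_G \<beta> y - takagi_G \<beta> x\<bar> \<le> K * \<bar>y - x\<bar>)"
proof -
  interpret takagi_beta \<beta> "1 / beta_M \<beta>"
    using assms by unfold_locales
  show ?thesis
    using AE_orbit_approaches_zero AE_lborel_singleton[of 1]
  proof eventually_elim
    case (elim x)
    show ?case
    proof (intro impI notI)
      assume "x \<in> {0..1}" and "\<exists>K>0. \<forall>y\<in>{0..1}. \<bar>takagi_G \<beta> y - takagi_G \<beta> x\<bar> \<le> K * \<bar>y - x\<bar>"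
      then obtain K where x: "0 \<le> x" "x < 1" and "0 < K"
        and lip: "\<And>y. y \<in> {0..1} \<Longrightarrow> \<bar>takagi_G \<beta> y - takagi_G \<beta> x\<bar> \<le> K * \<bar>y - x\<bar>"
        using elim(2) by auto
      have "\<bar>takagi y - takagi x\<bar> \<le> K * (x - y)" if "0 \<le> y" "y \<le> x" for y
        using lip[of y] that x takagi_G_eq_takagi[OF refl] by simp
      then obtain L where "\<And>n. (T ^^ n) x = 0 \<or> (1 / \<beta>) ^ L \<le> (T ^^ n) x"
        using left_lipschitz_imp_orbit_bounded_below[OF x] \<open>0 < K\<close> by (metis less_le)
      then show False
        using elim(1) x by (meson not_le)
    qed
  qed
qed

end
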